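(* Let $\{\mathbf{y}(k)\}_{k\in\mathbb{Z}_+}$ be generated by the distributed quantized average consensus and weight-balancing algorithm described in the context on a strongly connected digraph, under the stated step-size and range conditions. Then for each $i\in\mathcal{V}$ there exist $y_{i,\min},y_{i,\max}\in\mathbb{R}$ such that $y_{i,\min}\le y_i(k)\le y_{i,\max}$ for all $k\in\mathbb{Z}_+$.
   Context: $\mathcal{G}=(\mathcal{V},\mathcal{E})$, $\mathcal{V}=\{1,\dots,N\}$, no self-loops, strongly connected; $\mathcal{N}_i^-=\{j:(j,i)\in\mathcal{E}\}$, $\mathcal{N}_i^+=\{j:(i,j)\in\mathcal{E}\}$, $d_i^+=|\mathcal{N}_i^+|$. Algorithm: given $q_{\min}<q_{\max}$ and initial values $y_i(0)$ with $\bar y(0)=\frac1N\sum_i y_i(0)\in[q_{\min},q_{\max}]$; $a_{ij}(0)=1$ if $j\in\mathcal{N}_i^-$, else $0$. $\gamma(k)=2^{-n}$ for $2^n-1\le k\le 2^{n+1}-2$; $\alpha(k)>0$ nonincreasing with $\sum\alpha(k)=\infty$, $\sum\alpha(k)^2<\infty$. At step $k$: $b_i(k)=\sum_{j\in\mathcal{N}_i^-}a_{ij}(k)-\sum_{j\in\mathcal{N}_i^+}a_{ji}(k)$; $n_i(k)=\mathcal{I}\{b_i(k)\ge d_i^+\gamma(k)\}$; $\tilde y_i(k)=\min\{\max\{y_i(k),q_{\min}\},q_{\max}\}$; $x_i(k)=q_{\max}$ with probability $p_i(k)=\frac{\tilde y_i(k)-q_{\min}}{q_{\max}-q_{\min}}$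 and $q_{\min}$ otherwise; $a_{ij}(k+1)=a_{ij}(k)+n_j(k)\gamma(k)$ for $j\in\mathcal{N}_i^-$; $y_i(k+1)=y_i(k)+\alpha(k)\sum_{j\in\mathcal{N}_i^-}a_{ij}(k)(x_j(k)-x_i(k))+\alpha(k)b_i(k)x_i(k)$. *)

theory Defs
  imports Complex_Main
begin

definition in_nbrs :: "('v \<times> 'v) set \<Rightarrow> 'v \<Rightarrow> 'v set" where
  "in_nbrs E i = {j. (j, i) \<in> E}"

definition out_nbrs :: "('v \<times> 'v) set \<Rightarrow> 'v \<Rightarrow> 'v set" where
  "out_nbrs E i = {j. (i, j) \<in> E}"

definition out_deg :: "('v \<times> 'v) set \<Rightarrow> 'v \<Rightarrow> nat" where
  "out_deg E i = card (out_nbrs E i)"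

definition gamma :: "nat \<Rightarrow> real" where
  "gamma k = 1 / 2 ^ (THE n::nat. 2 ^ n - 1 \<le> k \<and> k \<le> 2 ^ (n + 1) - 2)"

text \<open>imbalance b_i(k) = in-weight minus out-weight, a k i j is the weight on edge (j,i)\<close>
definition imbalance :: "('v \<times> 'v) set \<Rightarrow> (nat \<Rightarrow> 'v \<Rightarrow> 'v \<Rightarrow> real) \<Rightarrow> nat \<Rightarrow> 'v \<Rightarrow> real" where
  "imbalance E a k i = (\<Sum>j\<in>in_nbrs E i. a k i j) - (\<Sum>j\<in>out_nbrs E i. a k j i)"

definition nind :: "('v \<times> 'v) set \<Rightarrow> (nat \<Rightarrow> 'v \<Rightarrow> 'v \<Rightarrow> real) \<Rightarrow> nat \<Rightarrow> 'v \<Rightarrow> real" where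
  "nind E a k i = (if imbalance E a k i \<ge> real (out_deg E i) * gamma k then 1 else 0)"

definition clip :: "real \<Rightarrow> real \<Rightarrow> real \<Rightarrow> real" where
  "clip qmin qmax v = min (max v qmin) qmax"

definition quant_prob :: "real \<Rightarrow> real \<Rightarrow> real \<Rightarrow> real" where
  "quant_prob qmin qmax v = (clip qmin qmax v - qmin) / (qmax - qmin)"

end

theory Submission
  imports Defs "HOL-Analysis.Analysis"
begin

(* All out-edges of a node j carry the same weight W_j(k), which grows by gamma(k) exactly when j
   fires.  Strong connectivity gives a positive balanced profile v.  A node fires only when its
   in-weight exceeds its out-weight by d_j gamma(k), so the ratio max_j W_j / v_j never increases,
   and the slack sum_j (max ratio * v_j - W_j) drops by gamma(k) whenever some node fires, while it
   is O(gamma(k)) when none does.  As gamma is not summable, the slack, hence every imbalance b_i(k),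
   is O(1/k), so sum_k alpha(k) |b_i(k)| is finite by square-summability of alpha.  Above qmax the
   quantized value of node i is qmax, so the consensus term cannot push y_i further up and only the
   summable imbalance term can; symmetrically below qmin. *)

section \<open>Real sequences\<close>

lemma gamma_eq:
  assumes "2 ^ n \<le> k + 1" and "k + 1 < (2::nat) ^ (n + 1)"
  shows "gamma k = 1 / 2 ^ n"
proof -
  have "(THE n::nat. 2 ^ n - 1 \<le> k \<and> k \<le> 2 ^ (n + 1) - 2) = n"
  proof (rule the_equality)
    show "2 ^ n - 1 \<le> k \<and> k \<le> 2 ^ (n + 1) - 2"
      using assms by auto
  next
    fix m assume "2 ^ m - 1 \<le> k \<and> k \<le> 2 ^ (m + 1) - (2::nat)"
    moreover have "1 \<le> (2::nat) ^ m" "2 \<le> (2::nat) ^ (m + 1)"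
      by simp_all
    ultimately have pow: "(2::nat) ^ m < 2 ^ (n + 1)" "(2::nat) ^ n < 2 ^ (m + 1)"
      using assms by linarith+
    have "m < n + 1" "n < m + 1"
      using power_less_imp_less_exp[OF _ pow(1)] power_less_imp_less_exp[OF _ pow(2)] by simp_all
    then show "m = n" by simp
  qed
  then show ?thesis by (simp add: gamma_def)
qed

lemma gamma_bounds: "1 / (real k + 1) \<le> gamma k \<and> gamma k \<le> 2 / (real k + 1)"
proof -
  obtain n where n: "2 ^ n \<le> k + 1" "k + 1 < (2::nat) ^ (n + 1)"
    using ex_power_ivl1[of 2 "k + 1"] by auto
  then have "real (2 ^ n) \<le> real (k + 1)" "real (k + 1) \<le> real (2 * 2 ^ n)"
    by (simp_all only: of_nat_le_iff) simp
  then have "(2::real) ^ n \<le> real k + 1" "real k + 1 \<le> 2 * 2 ^ n"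
    by simp_all
  then show ?thesis
    by (simp add: gamma_eq[OF n] field_simps)
qed

lemma gamma_pos: "0 < gamma k"
  by (rule less_le_trans[OF _ conjunct1[OF gamma_bounds]]) simp

lemma not_summable_inverse_Suc: "\<not> summable (\<lambda>k. 1 / (real k + 1))"
  using not_summable_harmonic[where 'a=real] summable_Suc_iff[of "\<lambda>n. inverse (real n)"]
  by (simp add: inverse_eq_divide add.commute)

lemma summable_inverse_Suc_squared: "summable (\<lambda>k. (1 / (real k + 1))\<^sup>2)"
  using inverse_power_summable[of 2, where 'a=real] summable_Suc_iff[of "\<lambda>n. inverse (real n ^ 2)"]
  by (simp add: power_divide inverse_eq_divide add.commute)

lemma dichotomy_frequently_small:
  fixes P g :: "nat \<Rightarrow> real"
  assumes P_nonneg: "\<And>k. 0 \<le> P k" and g_ge: "\<And>k. 1 / (real k + 1) \<le> g k"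
    and dichotomy: "\<And>k. P k \<le> C * g k \<or> P (Suc k) \<le> P k - g k"
  shows "\<exists>K\<ge>K0. P K \<le> C * g K"
proof (rule ccontr)
  assume "\<not> ?thesis"
  then have descent: "P (Suc k) \<le> P k - g k" if "K0 \<le> k" for k
    using dichotomy that by fastforce
  have g_nonneg: "0 \<le> g k" for k
    by (rule order_trans[OF _ g_ge]) simp
  have partial: "(\<Sum>t<m. g (t + K0)) \<le> P K0 - P (m + K0)" for m
  proof (induction m)
    case (Suc m)
    then show ?case using descent[of "m + K0"] by simp
  qed simp
  have "(\<Sum>t<m. g (t + K0)) \<le> P K0" for m
    using partial[of m] P_nonneg[of "m + K0"] by linarith
  then have "summable (\<lambda>t. g (t + K0))"
    by (intro summableI_nonneg_bounded[where x = "P K0"] g_nonneg)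
  then have "summable g" by simp
  then have "summable (\<lambda>k. 1 / (real k + 1))"
    by (rule summable_comparison_test') (simp add: g_ge)
  then show False using not_summable_inverse_Suc by simp
qed

lemma dichotomy_decay_from:
  fixes P g :: "nat \<Rightarrow> real"
  assumes P_mono: "\<And>k. P (Suc k) \<le> P k"
    and g_ge: "\<And>k. 1 / (real k + 1) \<le> g k" and g_le: "\<And>k. g k \<le> 2 / (real k + 1)"
    and dichotomy: "\<And>k. P k \<le> C * g k \<or> P (Suc k) \<le> P k - g k" and "0 \<le> C"
    and K_large: "4 * C + 2 \<le> real K" and small: "P K \<le> C * g K" and "K \<le> k"
  shows "P k \<le> (4 * C + 2) / (real k + 1)"
  using \<open>K \<le> k\<close>
proof (induction k rule: dec_induct)
  case base
  have "P K \<le> C * (2 / (real K + 1))"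
    using small mult_left_mono[OF g_le \<open>0 \<le> C\<close>] by (rule order_trans)
  also have "\<dots> \<le> (4 * C + 2) / (real K + 1)"
    using \<open>0 \<le> C\<close> by (simp add: divide_right_mono)
  finally show ?case .
next
  case (step k)
  have "real K \<le> real k"
    using \<open>K \<le> k\<close> by simp
  then have "4 * C + 2 \<le> real k + 2"
    using K_large by linarith
  consider "P k \<le> C * g k" | "P (Suc k) \<le> P k - g k"
    using dichotomy by blast
  then show ?case
  proof cases
    case 1
    have "P (Suc k) \<le> C * (2 / (real k + 1))"
      using P_mono[of k] 1 mult_left_mono[OF g_le \<open>0 \<le> C\<close>] by (meson order_trans)
    also have "\<dots> \<le> (4 * C + 2) / (real (Suc k) + 1)"
      using \<open>0 \<le> C\<close> mult_nonneg_nonneg[OF \<open>0 \<le> C\<close> of_nat_0_le_iff[of k]]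
      by (simp add: field_simps)
    finally show ?thesis .
  next
    case 2
    then have "P (Suc k) \<le> (4 * C + 2) / (real k + 1) - 1 / (real k + 1)"
      using step.IH g_ge[of k] by linarith
    also have "\<dots> = ((4 * C + 2) - 1) / (real k + 1)"
      by (rule diff_divide_distrib[symmetric])
    also have "\<dots> \<le> (4 * C + 2) / (real (Suc k) + 1)"
      using \<open>4 * C + 2 \<le> real k + 2\<close> by (simp add: field_simps)
    finally show ?thesis .
  qed
qed

lemma dichotomy_decay:
  fixes P g :: "nat \<Rightarrow> real"
  assumes "\<And>k. 0 \<le> P k" and "\<And>k. P (Suc k) \<le> P k"
    and "\<And>k. 1 / (real k + 1) \<le> g k" and "\<And>k. g k \<le> 2 / (real k + 1)"
    and "\<And>k. P k \<le> C * g k \<or> P (Suc k) \<le> P k - g k" and "0 \<le> C"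
  shows "\<exists>A K. \<forall>k\<ge>K. P k \<le> A / (real k + 1)"
proof -
  obtain K where "nat \<lceil>4 * C + 2\<rceil> \<le> K" "P K \<le> C * g K"
    using dichotomy_frequently_small[of P g C "nat \<lceil>4 * C + 2\<rceil>"] assms(1,3,5) by blast
  moreover from this have "4 * C + 2 \<le> real K" by linarith
  ultimately show ?thesis
    using dichotomy_decay_from[OF assms(2-6)] by blast
qed

lemma summable_mult_of_le_inverse_Suc:
  fixes alpha f :: "nat \<Rightarrow> real"
  assumes "summable (\<lambda>k. (alpha k)\<^sup>2)" and "\<And>k. 0 \<le> alpha k"
    and "\<And>k. K \<le> k \<Longrightarrow> \<bar>f k\<bar> \<le> A / (real k + 1)"
  shows "summable (\<lambda>k. alpha k * \<bar>f k\<bar>)"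
proof (rule summable_comparison_test')
  show "summable (\<lambda>k. \<bar>A\<bar> * ((alpha k)\<^sup>2 + (1 / (real k + 1))\<^sup>2))"
    by (intro summable_mult summable_add assms(1) summable_inverse_Suc_squared)
next
  fix k assume "K \<le> k"
  moreover have "A / (real k + 1) \<le> \<bar>A\<bar> / (real k + 1)"
    by (simp add: divide_right_mono)
  ultimately have "\<bar>f k\<bar> \<le> \<bar>A\<bar> * (1 / (real k + 1))"
    using assms(3)[of k] by simp
  then have "alpha k * \<bar>f k\<bar> \<le> alpha k * (\<bar>A\<bar> * (1 / (real k + 1)))"
    using assms(2)[of k] by (rule mult_left_mono)
  also have "\<dots> = \<bar>A\<bar> * (alpha k * (1 / (real k + 1)))"
    by (rule mult.left_commute)
  also have "\<dots> \<le> \<bar>A\<bar> * ((alpha k)\<^sup>2 + (1 / (real k + 1))\<^sup>2)"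
  proof (rule mult_left_mono)
    have "0 \<le> alpha k * (1 / (real k + 1))"
      using assms(2)[of k] by simp
    then show "alpha k * (1 / (real k + 1)) \<le> (alpha k)\<^sup>2 + (1 / (real k + 1))\<^sup>2"
      using sum_squares_bound[of "alpha k" "1 / (real k + 1)"] by (simp add: mult.assoc)
  qed simp
  finally show "norm (alpha k * \<bar>f k\<bar>) \<le> \<bar>A\<bar> * ((alpha k)\<^sup>2 + (1 / (real k + 1))\<^sup>2)"
    using assms(2)[of k] by simp
qed

lemma bounded_above_of_drift:
  fixes y \<beta> :: "nat \<Rightarrow> real"
  assumes above: "\<And>k. q \<le> y k \<Longrightarrow> y (Suc k) \<le> y k + \<beta> k"
    and below: "\<And>k. y k < q \<Longrightarrow> y (Suc k) \<le> q + M + \<beta> k"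
    and \<beta>_nonneg: "\<And>k. 0 \<le> \<beta> k" and "summable \<beta>"
  shows "y k \<le> max (y 0) (q + M) + suminf \<beta>"
proof -
  have "y k \<le> max (y 0) (q + M) + (\<Sum>t<k. \<beta> t)"
  proof (induction k)
    case (Suc k)
    have "0 \<le> (\<Sum>t<k. \<beta> t)"
      by (simp add: \<beta>_nonneg sum_nonneg)
    then show ?case
      using Suc above[of k] below[of k] by (cases "q \<le> y k") auto
  qed simp
  also have "(\<Sum>t<k. \<beta> t) \<le> suminf \<beta>"
    by (rule sum_le_suminf) (simp_all add: \<open>summable \<beta>\<close> \<beta>_nonneg)
  finally show ?thesis by simp
qed

section \<open>Balanced edge weights\<close>

(* Edge weights that depend only on the tail: every out-edge of j carries weight v j. *)
definition balanced :: "('v \<times> 'v) set \<Rightarrow> ('v \<Rightarrow> real) \<Rightarrow> bool" where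
  "balanced E v \<longleftrightarrow> (\<forall>i. (\<Sum>j\<in>in_nbrs E i. v j) = real (out_deg E i) * v i)"

lemma sum_in_nbrs_swap:
  fixes E :: "('v::finite \<times> 'v) set" and u :: "'v \<Rightarrow> real"
  shows "(\<Sum>i\<in>UNIV. \<Sum>j\<in>in_nbrs E i. u j) = (\<Sum>j\<in>UNIV. real (out_deg E j) * u j)"
proof -
  have "(\<Sum>i\<in>UNIV. \<Sum>j\<in>in_nbrs E i. u j) = (\<Sum>i\<in>UNIV. \<Sum>j\<in>UNIV. if (j, i) \<in> E then u j else 0)"
    by (simp add: in_nbrs_def sum.inter_filter[symmetric])
  also have "\<dots> = (\<Sum>j\<in>UNIV. \<Sum>i\<in>UNIV. if (j, i) \<in> E then u j else 0)"
    by (rule sum.swap)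
  also have "\<dots> = (\<Sum>j\<in>UNIV. real (out_deg E j) * u j)"
    by (simp add: out_deg_def out_nbrs_def sum.inter_filter[symmetric])
  finally show ?thesis .
qed

lemma balancedI_sum_in_nbrs_ge:
  fixes E :: "('v::finite \<times> 'v) set"
  assumes ge: "\<And>i. real (out_deg E i) * v i \<le> (\<Sum>j\<in>in_nbrs E i. v j)"
  shows "balanced E v"
proof -
  have "(\<Sum>i\<in>UNIV. (\<Sum>j\<in>in_nbrs E i. v j) - real (out_deg E i) * v i) = 0"
    by (simp add: sum_subtractf sum_in_nbrs_swap)
  then have "\<forall>i. (\<Sum>j\<in>in_nbrs E i. v j) - real (out_deg E i) * v i = 0"
    by (subst (asm) sum_nonneg_eq_0_iff) (use ge in auto)
  then show ?thesis by (simp add: balanced_def)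
qed

lemma exists_nonzero_balanced: "\<exists>u :: 'v::finite \<Rightarrow> real. (\<exists>j. u j \<noteq> 0) \<and> balanced E u"
proof -
  define f :: "real^'v \<Rightarrow> real^'v" where
    "f u = (\<chi> i. (\<Sum>j\<in>in_nbrs E i. u$j) - real (out_deg E i) * u$i)" for u
  have lin: "linear f"
    by (rule linearI) (simp_all add: f_def vec_eq_iff sum.distrib sum_distrib_left algebra_simps)
  have sum_zero: "(\<Sum>i\<in>UNIV. f u $ i) = 0" for u
    by (simp add: f_def sum_subtractf sum_in_nbrs_swap)
  have "f u \<noteq> (\<chi> i. 1)" for u
  proof
    assume "f u = (\<chi> i. 1)"
    then have "(\<Sum>i\<in>UNIV. f u $ i) = real CARD('v)" by simp
    with sum_zero[of u] show False by simp
  qed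
  then have "\<not> inj f"
    using linear_injective_imp_surjective[OF lin] by (metis surjD)
  then obtain u where "f u = 0" "u \<noteq> 0"
    using linear_injective_0[OF lin] by blast
  then have "(\<exists>j. u$j \<noteq> 0) \<and> balanced E (\<lambda>j. u$j)"
    by (auto simp: f_def vec_eq_iff balanced_def)
  then show ?thesis by blast
qed

lemma balanced_abs:
  fixes E :: "('v::finite \<times> 'v) set"
  assumes "balanced E u"
  shows "balanced E (\<lambda>j. \<bar>u j\<bar>)"
proof (rule balancedI_sum_in_nbrs_ge)
  fix i
  have "real (out_deg E i) * \<bar>u i\<bar> = \<bar>\<Sum>j\<in>in_nbrs E i. u j\<bar>"
    using assms by (simp add: balanced_def abs_mult)
  also have "\<dots> \<le> (\<Sum>j\<in>in_nbrs E i. \<bar>u j\<bar>)"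
    by (rule sum_abs)
  finally show "real (out_deg E i) * \<bar>u i\<bar> \<le> (\<Sum>j\<in>in_nbrs E i. \<bar>u j\<bar>)" .
qed

lemma balanced_nonneg_pos:
  fixes E :: "('v::finite \<times> 'v) set"
  assumes sc: "\<And>i j. (i, j) \<in> E\<^sup>*"
    and bal: "balanced E z" and nonneg: "\<And>j. 0 \<le> z j" and "\<exists>j. z j \<noteq> 0"
  shows "0 < z i"
proof (rule ccontr)
  assume "\<not> 0 < z i"
  then have "z i = 0" using nonneg[of i] by simp
  \<comment> \<open>a zero entry forces zero entries at all in-neighbours, hence everywhere\<close>
  have "z j = 0" for j
    using sc[of j i]
  proof (induction rule: converse_rtrancl_induct)
    case base then show ?case by (rule \<open>z i = 0\<close>)
  next
    case (step j l)
    then have "(\<Sum>j\<in>in_nbrs E l. z j) = 0" "j \<in> in_nbrs E l"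
      using bal by (simp_all add: balanced_def in_nbrs_def)
    then show ?case
      using sum_nonneg_eq_0_iff[of "in_nbrs E l" z] nonneg by auto
  qed
  with \<open>\<exists>j. z j \<noteq> 0\<close> show False by simp
qed

lemma exists_pos_balanced:
  fixes E :: "('v::finite \<times> 'v) set"
  assumes "\<And>i j. (i, j) \<in> E\<^sup>*"
  shows "\<exists>v. (\<forall>i. 0 < v i) \<and> balanced E v"
proof -
  obtain u :: "'v \<Rightarrow> real" where "\<exists>j. u j \<noteq> 0" "balanced E u"
    using exists_nonzero_balanced by blast
  then have "\<exists>j. \<bar>u j\<bar> \<noteq> 0" "balanced E (\<lambda>j. \<bar>u j\<bar>)"
    by (auto simp: balanced_abs)
  then show ?thesis
    using balanced_nonneg_pos[OF assms] by (metis abs_ge_zero)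
qed

lemma out_deg_pos:
  assumes no_loops: "\<And>i. (i, i) \<notin> E" and sc: "\<And>i j. (i, j) \<in> E\<^sup>*"
    and "E \<noteq> {}" and "finite (out_nbrs E i)"
  shows "0 < out_deg E i"
proof -
  obtain p q where "(p, q) \<in> E" using \<open>E \<noteq> {}\<close> by auto
  then have "p \<noteq> q" using no_loops by blast
  then obtain t where "t \<noteq> i" by metis
  from sc[of i t] this obtain j where "(i, j) \<in> E"
    by (cases rule: converse_rtranclE) auto
  then show ?thesis
    using assms(4) by (auto simp: out_deg_def out_nbrs_def card_gt_0_iff)
qed

lemma out_deg_le_card:
  fixes E :: "('v::finite \<times> 'v) set"
  shows "out_deg E i \<le> CARD('v)"
  unfolding out_deg_def by (rule card_mono) simp_all

section \<open>The weight-balancing iteration\<close>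

locale weight_balancing =
  fixes E :: "('v::finite \<times> 'v) set" and a :: "nat \<Rightarrow> 'v \<Rightarrow> 'v \<Rightarrow> real" and v :: "'v \<Rightarrow> real"
  assumes strongly_connected: "\<And>i j. (i, j) \<in> E\<^sup>*"
    and a_init: "\<And>i j. a 0 i j = (if (j, i) \<in> E then 1 else 0)"
    and a_step: "\<And>k i j. (j, i) \<in> E \<Longrightarrow> a (Suc k) i j = a k i j + nind E a k j * gamma k"
    and out_deg_pos: "\<And>i. 0 < out_deg E i"
    and v_pos: "\<And>i. 0 < v i"
    and v_balanced: "balanced E v"
begin

definition node_weight :: "nat \<Rightarrow> 'v \<Rightarrow> real" where
  "node_weight k j = 1 + (\<Sum>t<k. nind E a t j * gamma t)"

lemma node_weight_Suc: "node_weight (Suc k) j = node_weight k j + nind E a k j * gamma k"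
  by (simp add: node_weight_def)

lemma node_weight_ge_1: "1 \<le> node_weight k j"
  unfolding node_weight_def
  by (simp add: nind_def sum_nonneg less_imp_le[OF gamma_pos])

lemma edge_weight_eq: "(j, i) \<in> E \<Longrightarrow> a k i j = node_weight k j"
  by (induction k) (simp_all add: a_init a_step node_weight_Suc node_weight_def)

lemma imbalance_eq:
  "imbalance E a k i = (\<Sum>j\<in>in_nbrs E i. node_weight k j) - real (out_deg E i) * node_weight k i"
  by (simp add: imbalance_def in_nbrs_def out_nbrs_def out_deg_def edge_weight_eq)

lemma sum_in_nbrs_scaled: "(\<Sum>j\<in>in_nbrs E i. c * v j) = real (out_deg E i) * (c * v i)"
  using v_balanced by (simp add: balanced_def sum_distrib_left[symmetric])

lemma node_weight_Suc_le:
  assumes "\<And>l. node_weight k l \<le> \<rho> * v l"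
  shows "node_weight (Suc k) j \<le> \<rho> * v j"
proof (cases "nind E a k j = 0")
  case True
  then show ?thesis using assms by (simp add: node_weight_Suc)
next
  case False
  \<comment> \<open>j fires only if its in-weight, at most d_j \<rho> v_j, exceeds d_j (W_j + \<gamma>)\<close>
  then have fires: "real (out_deg E j) * gamma k \<le> imbalance E a k j"
    by (simp add: nind_def split: if_splits)
  have "(\<Sum>l\<in>in_nbrs E j. node_weight k l) \<le> (\<Sum>l\<in>in_nbrs E j. \<rho> * v l)"
    by (rule sum_mono) (rule assms)
  also have "\<dots> = real (out_deg E j) * (\<rho> * v j)"
    by (rule sum_in_nbrs_scaled)
  finally have "real (out_deg E j) * (node_weight k j + gamma k) \<le> real (out_deg E j) * (\<rho> * v j)"
    using fires by (simp add: imbalance_eq algebra_simps)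
  moreover have "nind E a k j = 1"
    using False by (simp add: nind_def split: if_splits)
  ultimately show ?thesis
    using out_deg_pos[of j] by (simp add: node_weight_Suc)
qed

definition max_ratio :: "nat \<Rightarrow> real" where
  "max_ratio k = Max (range (\<lambda>j. node_weight k j / v j))"

lemma node_weight_le_max_ratio: "node_weight k j \<le> max_ratio k * v j"
proof -
  have "node_weight k j / v j \<le> max_ratio k"
    unfolding max_ratio_def by (rule Max_ge) auto
  then show ?thesis using v_pos[of j] by (simp add: divide_le_eq)
qed

lemma max_ratio_attained: "\<exists>j. node_weight k j = max_ratio k * v j"
proof -
  have "max_ratio k \<in> range (\<lambda>j. node_weight k j / v j)"
    unfolding max_ratio_def by (rule Max_in) auto
  then obtain j where "max_ratio k = node_weight k j / v j" by blast
  then have "node_weight k j = max_ratio k * v j" using v_pos[of j] by simp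
  then show ?thesis ..
qed

lemma max_ratio_Suc_le: "max_ratio (Suc k) \<le> max_ratio k"
proof -
  have "node_weight (Suc k) j / v j \<le> max_ratio k" for j
    using node_weight_Suc_le[OF node_weight_le_max_ratio] v_pos[of j] by (simp add: divide_le_eq)
  then show ?thesis
    unfolding max_ratio_def by (intro Max.boundedI) auto
qed

lemma edge_weight_bounds:
  assumes "(j, i) \<in> E"
  shows "1 \<le> a k i j \<and> a k i j \<le> max_ratio 0 * v j"
proof -
  have "max_ratio k \<le> max_ratio 0"
    using decseq_SucI[of max_ratio, OF max_ratio_Suc_le] by (simp add: decseq_def)
  then have "node_weight k j \<le> max_ratio 0 * v j"
    using node_weight_le_max_ratio[of k j] v_pos[of j] by (meson mult_right_mono less_imp_le order_trans)
  then show ?thesis using node_weight_ge_1 by (simp add: edge_weight_eq[OF assms])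
qed

definition slack :: "nat \<Rightarrow> real" where
  "slack k = (\<Sum>j\<in>UNIV. max_ratio k * v j - node_weight k j)"

lemma slack_nonneg: "0 \<le> slack k"
  unfolding slack_def by (intro sum_nonneg) (simp add: node_weight_le_max_ratio)

lemma slack_Suc_le: "slack (Suc k) \<le> slack k - gamma k * (\<Sum>j\<in>UNIV. nind E a k j)"
proof -
  have "slack (Suc k) \<le> (\<Sum>j\<in>UNIV. (max_ratio k * v j - node_weight k j) - gamma k * nind E a k j)"
    unfolding slack_def
    by (intro sum_mono) (use max_ratio_Suc_le[of k] v_pos in \<open>simp add: node_weight_Suc mult_right_mono\<close>)
  then show ?thesis by (simp add: slack_def sum_subtractf sum_distrib_left)
qed

lemma slack_Suc_le_slack: "slack (Suc k) \<le> slack k"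
proof -
  have "0 \<le> gamma k * (\<Sum>j\<in>UNIV. nind E a k j)"
    using gamma_pos[of k] by (intro mult_nonneg_nonneg sum_nonneg) (simp_all add: nind_def)
  then show ?thesis
    using slack_Suc_le[of k] by linarith
qed

lemma abs_imbalance_le_slack: "\<bar>imbalance E a k i\<bar> \<le> (real (out_deg E i) + 1) * slack k"
proof -
  define u where "u j = max_ratio k * v j - node_weight k j" for j
  have u_nonneg: "0 \<le> u j" for j
    by (simp add: u_def node_weight_le_max_ratio)
  have u_le: "u j \<le> slack k" for j
    unfolding slack_def u_def[symmetric] by (rule member_le_sum) (auto simp: u_nonneg)
  have "(\<Sum>j\<in>in_nbrs E i. u j)
      = real (out_deg E i) * (max_ratio k * v i) - (\<Sum>j\<in>in_nbrs E i. node_weight k j)"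
    by (simp add: u_def sum_subtractf sum_in_nbrs_scaled)
  then have "imbalance E a k i = real (out_deg E i) * u i - (\<Sum>j\<in>in_nbrs E i. u j)"
    by (simp add: u_def imbalance_eq algebra_simps)
  moreover have "(\<Sum>j\<in>in_nbrs E i. u j) \<le> slack k"
    unfolding slack_def u_def[symmetric] by (rule sum_mono2) (auto simp: u_nonneg)
  moreover have "real (out_deg E i) * u i \<le> real (out_deg E i) * slack k"
    by (simp add: u_le mult_left_mono)
  moreover have "0 \<le> real (out_deg E i) * u i" "0 \<le> (\<Sum>j\<in>in_nbrs E i. u j)"
    by (simp_all add: u_nonneg sum_nonneg)
  ultimately show ?thesis
    unfolding abs_le_iff by (simp only: distrib_right) linarith
qed

lemma quiet_path_bound:
  assumes quiet: "\<And>i. nind E a k i = 0"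
    and below: "\<And>j. r * v j \<le> node_weight k j" and tight: "node_weight k l = r * v l"
    and "(j, l) \<in> E ^^ m"
  shows "node_weight k j - r * v j \<le> ((real CARD('v) + 1) ^ m - 1) * gamma k"
  using \<open>(j, l) \<in> E ^^ m\<close>
proof (induction m arbitrary: j)
  case 0
  then show ?case using tight by simp
next
  case (Suc m)
  define D where "D = real CARD('v)"
  define z where "z j = node_weight k j - r * v j" for j
  obtain l' where edge: "(j, l') \<in> E" and path: "(l', l) \<in> E ^^ m"
    using relpow_Suc_D2[OF Suc.prems] by blast
  have z_nonneg: "0 \<le> z j" for j
    using below by (simp add: z_def)
  have "z j \<le> (\<Sum>j\<in>in_nbrs E l'. z j)"
    by (rule member_le_sum) (use edge z_nonneg in \<open>auto simp: in_nbrs_def\<close>)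
  also have "\<dots> = imbalance E a k l' + real (out_deg E l') * z l'"
    by (simp add: z_def imbalance_eq sum_subtractf sum_in_nbrs_scaled algebra_simps)
  also have "\<dots> \<le> real (out_deg E l') * (gamma k + z l')"
    using quiet[of l'] by (simp add: nind_def algebra_simps split: if_splits)
  also have "\<dots> \<le> D * (gamma k + ((D + 1) ^ m - 1) * gamma k)"
    using Suc.IH[OF path] out_deg_le_card[of E l'] gamma_pos[of k] z_nonneg[of l']
    by (intro mult_mono) (simp_all add: z_def D_def)
  also have "\<dots> \<le> ((D + 1) ^ Suc m - 1) * gamma k"
    using gamma_pos[of k] by (simp add: D_def algebra_simps)
  finally show ?case by (simp add: z_def D_def)
qed

lemma quiet_ratio_spread:
  assumes quiet: "\<And>i. nind E a k i = 0"
    and below: "\<And>j. r * v j \<le> node_weight k j" and tight: "node_weight k j0 = r * v j0"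
  shows "(max_ratio k - r) * Min (range v) \<le> ((real CARD('v) + 1) ^ card E - 1) * gamma k"
proof -
  obtain j1 where top: "node_weight k j1 = max_ratio k * v j1"
    using max_ratio_attained by blast
  obtain m where "m \<le> card E" and path: "(j1, j0) \<in> E ^^ m"
    using rtrancl_finite_eq_relpow[of E] strongly_connected by fastforce
  have "0 \<le> max_ratio k - r"
    using below[of j1] top v_pos[of j1] by (simp add: left_diff_distrib)
  then have "(max_ratio k - r) * Min (range v) \<le> (max_ratio k - r) * v j1"
    by (intro mult_left_mono) simp_all
  also have "\<dots> \<le> ((real CARD('v) + 1) ^ m - 1) * gamma k"
    using quiet_path_bound[OF quiet below tight path] top by (simp add: left_diff_distrib)
  also have "\<dots> \<le> ((real CARD('v) + 1) ^ card E - 1) * gamma k"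
    using \<open>m \<le> card E\<close> gamma_pos[of k] by (intro mult_right_mono diff_right_mono power_increasing) simp_all
  finally show ?thesis .
qed

lemma quiet_slack_bound:
  obtains C where "0 \<le> C" and "\<And>k. (\<And>i. nind E a k i = 0) \<Longrightarrow> slack k \<le> C * gamma k"
proof
  define F where "F = (real CARD('v) + 1) ^ card E - 1"
  define vmin where "vmin = Min (range v)"
  have "0 < vmin"
    using v_pos by (simp add: vmin_def)
  then show "0 \<le> F / vmin * (\<Sum>j\<in>UNIV. v j)"
    using v_pos by (simp add: F_def sum_nonneg less_imp_le)
  fix k assume quiet: "\<And>i. nind E a k i = 0"
  define r where "r = Min (range (\<lambda>j. node_weight k j / v j))"
  have below: "r * v j \<le> node_weight k j" for j
  proof -
    have "r \<le> node_weight k j / v j"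
      unfolding r_def by (rule Min_le) auto
    then show ?thesis using v_pos[of j] by (simp add: le_divide_eq)
  qed
  have "r \<in> range (\<lambda>j. node_weight k j / v j)"
    unfolding r_def by (rule Min_in) auto
  then obtain j0 where "r = node_weight k j0 / v j0" by blast
  then have "node_weight k j0 = r * v j0"
    using v_pos[of j0] by simp
  then have spread: "max_ratio k - r \<le> F * gamma k / vmin"
    using quiet_ratio_spread[OF quiet below] \<open>0 < vmin\<close> by (simp add: F_def vmin_def pos_le_divide_eq)
  have "slack k \<le> (\<Sum>j\<in>UNIV. (max_ratio k - r) * v j)"
    unfolding slack_def by (intro sum_mono) (simp add: below left_diff_distrib)
  also have "\<dots> = (max_ratio k - r) * (\<Sum>j\<in>UNIV. v j)"
    by (simp add: sum_distrib_left)
  also have "\<dots> \<le> F * gamma k / vmin * (\<Sum>j\<in>UNIV. v j)"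
    using spread by (intro mult_right_mono) (simp_all add: sum_nonneg v_pos less_imp_le)
  finally show "slack k \<le> F / vmin * (\<Sum>j\<in>UNIV. v j) * gamma k"
    by (simp add: field_simps)
qed

lemma slack_dichotomy:
  obtains C where "0 \<le> C" and "\<And>k. slack k \<le> C * gamma k \<or> slack (Suc k) \<le> slack k - gamma k"
proof -
  obtain C where "0 \<le> C" and quiet: "\<And>k. (\<And>i. nind E a k i = 0) \<Longrightarrow> slack k \<le> C * gamma k"
    using quiet_slack_bound by blast
  have "slack (Suc k) \<le> slack k - gamma k" if "nind E a k i \<noteq> 0" for k i
  proof -
    have "1 \<le> (\<Sum>j\<in>UNIV. nind E a k j)"
      using that member_le_sum[of i UNIV "nind E a k"] by (simp add: nind_def split: if_splits)
    then have "gamma k \<le> gamma k * (\<Sum>j\<in>UNIV. nind E a k j)"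
      using gamma_pos[of k] by (simp add: mult_le_cancel_left1)
    then show ?thesis
      using slack_Suc_le[of k] by linarith
  qed
  then show ?thesis
    using that \<open>0 \<le> C\<close> quiet by blast
qed

lemma imbalance_decay: "\<exists>A K. \<forall>k\<ge>K. \<bar>imbalance E a k i\<bar> \<le> A / (real k + 1)"
proof -
  obtain C where "0 \<le> C" "\<And>k. slack k \<le> C * gamma k \<or> slack (Suc k) \<le> slack k - gamma k"
    using slack_dichotomy by blast
  then obtain A K where decay: "\<forall>k\<ge>K. slack k \<le> A / (real k + 1)"
    using dichotomy_decay[of slack gamma C] slack_nonneg slack_Suc_le_slack gamma_bounds by blast
  have "\<bar>imbalance E a k i\<bar> \<le> ((real (out_deg E i) + 1) * A) / (real k + 1)" if "K \<le> k" for k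
    using abs_imbalance_le_slack[of k i] mult_left_mono[OF decay[rule_format, OF that], of "real (out_deg E i) + 1"]
    by simp
  then show ?thesis by blast
qed

end

lemma edge_weights_bounded_imbalance_decay:
  fixes E :: "('v::finite \<times> 'v) set" and a :: "nat \<Rightarrow> 'v \<Rightarrow> 'v \<Rightarrow> real"
  assumes no_loops: "\<And>i. (i, i) \<notin> E" and sc: "\<And>i j. (i, j) \<in> E\<^sup>*"
    and a_init: "\<And>i j. a 0 i j = (if (j, i) \<in> E then 1 else 0)"
    and a_step: "\<And>k i j. (j, i) \<in> E \<Longrightarrow> a (Suc k) i j = a k i j + nind E a k j * gamma k"
  obtains B K A where "\<And>k j. j \<in> in_nbrs E i \<Longrightarrow> 0 \<le> a k i j \<and> a k i j \<le> B j"
    and "\<And>k. K \<le> k \<Longrightarrow> \<bar>imbalance E a k i\<bar> \<le> A / (real k + 1)"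
proof (cases "E = {}")
  case True
  then have "in_nbrs E i = {}" "imbalance E a k i = 0" for k
    by (simp_all add: imbalance_def in_nbrs_def out_nbrs_def)
  then show ?thesis
    using that[of _ 0 0] by simp
next
  case False
  obtain v where "\<forall>i. 0 < v i" "balanced E v"
    using exists_pos_balanced[OF sc] by blast
  then interpret weight_balancing E a v
    using out_deg_pos[OF no_loops sc False] by unfold_locales (simp_all add: sc a_init a_step)
  obtain A K where "\<forall>k\<ge>K. \<bar>imbalance E a k i\<bar> \<le> A / (real k + 1)"
    using imbalance_decay by blast
  moreover have "0 \<le> a k i j \<and> a k i j \<le> max_ratio 0 * v j" if "j \<in> in_nbrs E i" for k j
    using edge_weight_bounds[of j i k] that by (simp add: in_nbrs_def)
  ultimately show ?thesis
    by (intro that[of "\<lambda>j. max_ratio 0 * v j" K A]) auto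
qed

section \<open>The consensus states\<close>

lemma quant_prob_ge_qmax: "qmin < qmax \<Longrightarrow> qmax \<le> y \<Longrightarrow> quant_prob qmin qmax y = 1"
  by (simp add: quant_prob_def clip_def)

lemma quant_prob_le_qmin: "qmin < qmax \<Longrightarrow> y \<le> qmin \<Longrightarrow> quant_prob qmin qmax y = 0"
  by (simp add: quant_prob_def clip_def)

lemma abs_consensus_sum_le:
  fixes w B x :: "'v \<Rightarrow> real"
  assumes w_bounds: "\<And>j. j \<in> A \<Longrightarrow> 0 \<le> w j \<and> w j \<le> B j" and x_abs: "\<And>j. \<bar>x j\<bar> \<le> Q"
  shows "\<bar>\<Sum>j\<in>A. w j * (x j - x i)\<bar> \<le> (\<Sum>j\<in>A. B j) * (2 * Q)"
proof -
  have "\<bar>\<Sum>j\<in>A. w j * (x j - x i)\<bar> \<le> (\<Sum>j\<in>A. \<bar>w j\<bar> * \<bar>x j - x i\<bar>)"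
    unfolding abs_mult[symmetric] by (rule sum_abs)
  also have "\<dots> \<le> (\<Sum>j\<in>A. B j * (2 * Q))"
  proof (rule sum_mono)
    fix j assume "j \<in> A"
    then have "\<bar>w j\<bar> \<le> B j"
      using w_bounds by fastforce
    moreover have "\<bar>x j - x i\<bar> \<le> 2 * Q"
      using abs_triangle_ineq4[of "x j" "x i"] x_abs[of j] x_abs[of i] by linarith
    ultimately show "\<bar>w j\<bar> * \<bar>x j - x i\<bar> \<le> B j * (2 * Q)"
      by (intro mult_mono) auto
  qed
  finally show ?thesis by (simp add: sum_distrib_right)
qed

lemma node_state_bounded_above:
  fixes x y :: "nat \<Rightarrow> 'v \<Rightarrow> real" and a :: "nat \<Rightarrow> 'v \<Rightarrow> 'v \<Rightarrow> real" and alpha b :: "nat \<Rightarrow> real"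
  assumes x_le: "\<And>k j. x k j \<le> q" and x_abs: "\<And>k j. \<bar>x k j\<bar> \<le> Q"
    and x_top: "\<And>k. q \<le> y k i \<Longrightarrow> x k i = q"
    and a_bounds: "\<And>k j. j \<in> in_nbrs E i \<Longrightarrow> 0 \<le> a k i j \<and> a k i j \<le> B j"
    and alpha_pos: "\<And>k. 0 < alpha k" and alpha_le: "\<And>k. alpha k \<le> alpha 0"
    and summable: "summable (\<lambda>k. alpha k * \<bar>b k\<bar>)"
    and y_step: "\<And>k. y (Suc k) i = y k i + alpha k * (\<Sum>j\<in>in_nbrs E i. a k i j * (x k j - x k i))
      + alpha k * b k * x k i"
  shows "\<exists>c. \<forall>k. y k i \<le> c"
proof -
  define s where "s k = (\<Sum>j\<in>in_nbrs E i. a k i j * (x k j - x k i))" for k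
  define M where "M = (\<Sum>j\<in>in_nbrs E i. B j) * (2 * Q)"
  define \<beta> where "\<beta> k = alpha k * \<bar>b k\<bar> * Q" for k
  have y_Suc: "y (Suc k) i = y k i + alpha k * s k + alpha k * b k * x k i" for k
    using y_step by (simp add: s_def)
  have s_le: "\<bar>s k\<bar> \<le> M" for k
    unfolding s_def M_def using a_bounds x_abs by (rule abs_consensus_sum_le)
  have imbalance_le: "alpha k * b k * x k i \<le> \<beta> k" for k
  proof -
    have "b k * x k i \<le> \<bar>b k\<bar> * Q"
      using mult_left_mono[OF x_abs[of k i] abs_ge_zero[of "b k"]] abs_ge_self[of "b k * x k i"]
      by (simp add: abs_mult)
    then show ?thesis
      using mult_left_mono[of _ _ "alpha k"] alpha_pos[of k] by (simp add: \<beta>_def mult.assoc)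
  qed
  have "y (Suc k) i \<le> y k i + \<beta> k" if "q \<le> y k i" for k
  proof -
    have "s k \<le> 0"
      unfolding s_def using a_bounds x_le x_top[OF that]
      by (intro sum_nonpos mult_nonneg_nonpos) auto
    then have "alpha k * s k \<le> 0"
      using alpha_pos[of k] by (simp add: mult_nonneg_nonpos)
    then show ?thesis
      using y_Suc[of k] imbalance_le[of k] by linarith
  qed
  moreover have "y (Suc k) i \<le> q + alpha 0 * M + \<beta> k" if "y k i < q" for k
  proof -
    have "alpha k * s k \<le> alpha k * M"
      using s_le[of k] alpha_pos[of k] by (simp add: abs_le_iff)
    also have "\<dots> \<le> alpha 0 * M"
      using alpha_le[of k] s_le[of k] by (simp add: mult_right_mono order_trans[OF abs_ge_zero])
    finally show ?thesis
      using y_Suc[of k] imbalance_le[of k] that by linarith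
  qed
  moreover have "summable \<beta>"
    unfolding \<beta>_def by (intro summable_mult2 summable)
  moreover have "0 \<le> \<beta> k" for k
    using alpha_pos[of k] x_abs[of k i] by (simp add: \<beta>_def order_trans[OF abs_ge_zero])
  ultimately show ?thesis
    using bounded_above_of_drift[of q "\<lambda>k. y k i" \<beta> "alpha 0 * M"] by blast
qed

lemma node_state_bounded:
  fixes x y :: "nat \<Rightarrow> 'v \<Rightarrow> real" and a :: "nat \<Rightarrow> 'v \<Rightarrow> 'v \<Rightarrow> real" and alpha b :: "nat \<Rightarrow> real"
  assumes x_range: "\<And>k j. qmin \<le> x k j \<and> x k j \<le> qmax"
    and x_top: "\<And>k. qmax \<le> y k i \<Longrightarrow> x k i = qmax"
    and x_bot: "\<And>k. y k i \<le> qmin \<Longrightarrow> x k i = qmin"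
    and a_bounds: "\<And>k j. j \<in> in_nbrs E i \<Longrightarrow> 0 \<le> a k i j \<and> a k i j \<le> B j"
    and alpha_pos: "\<And>k. 0 < alpha k" and alpha_le: "\<And>k. alpha k \<le> alpha 0"
    and summable: "summable (\<lambda>k. alpha k * \<bar>b k\<bar>)"
    and y_step: "\<And>k. y (Suc k) i = y k i + alpha k * (\<Sum>j\<in>in_nbrs E i. a k i j * (x k j - x k i))
      + alpha k * b k * x k i"
  shows "\<exists>ymin ymax. \<forall>k. ymin \<le> y k i \<and> y k i \<le> ymax"
proof -
  define Q where "Q = \<bar>qmin\<bar> + \<bar>qmax\<bar>"
  have x_le: "x k j \<le> qmax" and neg_x_le: "- x k j \<le> - qmin"
    and x_abs: "\<bar>x k j\<bar> \<le> Q" and neg_x_abs: "\<bar>- x k j\<bar> \<le> Q" for k j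
    using x_range[of k j] by (auto simp: Q_def)
  obtain c where upper: "\<forall>k. y k i \<le> c"
    using node_state_bounded_above[where x = x and y = y and i = i and E = E and a = a and B = B
        and alpha = alpha and b = b,
        OF x_le x_abs x_top a_bounds alpha_pos alpha_le summable y_step] by blast
  \<comment> \<open>the lower bound is the upper bound for the negated system\<close>
  have neg_sum: "(\<Sum>j\<in>in_nbrs E i. a k i j * (- x k j - - x k i))
      = - (\<Sum>j\<in>in_nbrs E i. a k i j * (x k j - x k i))" for k
    unfolding sum_negf[symmetric] by (rule sum.cong) (simp_all add: algebra_simps)
  have neg_x_top: "- x k i = - qmin" if "- qmin \<le> - y k i" for k
    using x_bot that by simp
  have neg_y_step: "- y (Suc k) i = - y k i
      + alpha k * (\<Sum>j\<in>in_nbrs E i. a k i j * (- x k j - - x k i))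
      + alpha k * b k * - x k i" for k
    unfolding neg_sum using y_step[of k] by simp
  obtain c' where lower: "\<forall>k. - y k i \<le> c'"
    using node_state_bounded_above[where x = "\<lambda>k j. - x k j" and y = "\<lambda>k j. - y k j" and i = i
        and E = E and a = a and B = B and alpha = alpha and b = b,
        OF neg_x_le neg_x_abs neg_x_top a_bounds alpha_pos alpha_le summable neg_y_step] by blast
  show ?thesis
    using upper lower by (metis neg_le_iff_le minus_minus)
qed

theorem lemma10:
  fixes E :: "('v::finite \<times> 'v) set"
    and qmin qmax :: real
    and alpha :: "nat \<Rightarrow> real"
    and a :: "nat \<Rightarrow> 'v \<Rightarrow> 'v \<Rightarrow> real"
    and x y :: "nat \<Rightarrow> 'v \<Rightarrow> real"
  assumes no_loops: "\<And>i. (i, i) \<notin> E"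
    and strongly_connected: "\<And>i j. (i, j) \<in> E\<^sup>*"
    and q_lt: "qmin < qmax"
    and avg_range: "(\<Sum>i\<in>UNIV. y 0 i) / real (card (UNIV :: 'v set)) \<in> {qmin..qmax}"
    and a_init: "\<And>i j. a 0 i j = (if (j, i) \<in> E then 1 else 0)"
    and alpha_pos: "\<And>k. alpha k > 0"
    and alpha_noninc: "\<And>k. alpha (Suc k) \<le> alpha k"
    and alpha_not_summable: "\<not> summable alpha"
    and alpha_sq_summable: "summable (\<lambda>k. (alpha k)\<^sup>2)"
    and x_vals: "\<And>k i. x k i = qmin \<or> x k i = qmax"
    and x_max_possible: "\<And>k i. x k i = qmax \<Longrightarrow> quant_prob qmin qmax (y k i) > 0"
    and x_min_possible: "\<And>k i. x k i = qmin \<Longrightarrow> quant_prob qmin qmax (y k i) < 1"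
    and a_step: "\<And>k i j. (j, i) \<in> E \<Longrightarrow> a (Suc k) i j = a k i j + nind E a k j * gamma k"
    and y_step: "\<And>k i. y (Suc k) i = y k i
        + alpha k * (\<Sum>j\<in>in_nbrs E i. a k i j * (x k j - x k i))
        + alpha k * imbalance E a k i * x k i"
  shows "\<forall>i. \<exists>ymin ymax. \<forall>k. ymin \<le> y k i \<and> y k i \<le> ymax"
proof
  fix i
  obtain B K A where a_bounds: "\<And>k j. j \<in> in_nbrs E i \<Longrightarrow> 0 \<le> a k i j \<and> a k i j \<le> B j"
    and decay: "\<And>k. K \<le> k \<Longrightarrow> \<bar>imbalance E a k i\<bar> \<le> A / (real k + 1)"
    using edge_weights_bounded_imbalance_decay[OF no_loops strongly_connected a_init a_step, where i = i]
    by metis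
  have summable: "summable (\<lambda>k. alpha k * \<bar>imbalance E a k i\<bar>)"
    by (rule summable_mult_of_le_inverse_Suc[OF alpha_sq_summable _ decay])
      (simp add: alpha_pos less_imp_le)
  have alpha_le: "alpha k \<le> alpha 0" for k
    using decseq_SucI[of alpha, OF alpha_noninc] by (simp add: decseq_def)
  have x_range: "qmin \<le> x k j \<and> x k j \<le> qmax" for k j
    using x_vals[of k j] q_lt by auto
  have x_top: "x k i = qmax" if "qmax \<le> y k i" for k
    using x_vals[of k i] x_min_possible[of k i] quant_prob_ge_qmax[OF q_lt that] by auto
  have x_bot: "x k i = qmin" if "y k i \<le> qmin" for k
    using x_vals[of k i] x_max_possible[of k i] quant_prob_le_qmin[OF q_lt that] by auto
  show "\<exists>ymin ymax. \<forall>k. ymin \<le> y k i \<and> y k i \<le> ymax"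
    using node_state_bounded[where x = x and y = y and i = i and E = E and a = a and B = B
        and alpha = alpha and b = "\<lambda>k. imbalance E a k i",
        OF x_range x_top x_bot a_bounds alpha_pos alpha_le summable y_step] .
qed

end
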